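(* For every positive integer $m$ such that the shell $(\mathbb{Z}^2)_m=\{x\in\mathbb{Z}^2 : (x,x)=m\}$ is nonempty, the shell $(\mathbb{Z}^2)_m$ is not a spherical $4$-design.
   Context: $(x,y)$ denotes the standard Euclidean inner product on $\mathbb{R}^2$. A finite nonempty set $X\subset S^{n-1}=\{x\in\mathbb{R}^n: x_1^2+\cdots+x_n^2=1\}$ is a spherical $t$-design if $\frac{1}{|X|}\sum_{x\in X}f(x)=\frac{1}{|S^{n-1}|}\int_{S^{n-1}}f(x)\,d\sigma(x)$ for all polynomials $f$ of degree at most $t$; a finite nonempty subset $X$ of the sphere $S^{n-1}(r)$ of radius $r$ is a spherical $t$-design if $\frac{1}{r}X$ is one. (For $n=2$, identifying $\mathbb{R}^2$ with $\mathbb{C}$, a finite set $\{\xi_1,\dots,\xi_N\}$ on the unit circle is a spherical $t$-design iff $\sum_i \xi_i^k=0$ for all $k=1,\dots,t$.) *)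

theory Defs
  imports "HOL-Analysis.Analysis"
begin

definition poly2 :: "nat \<Rightarrow> (nat \<Rightarrow> nat \<Rightarrow> real) \<Rightarrow> real \<times> real \<Rightarrow> real" where
  "poly2 t c p = (\<Sum>i\<le>t. \<Sum>j\<le>t - i. c i j * fst p ^ i * snd p ^ j)"

text \<open>Spherical t-design on the unit circle S^1: the normalized surface measure
on S^1 (of total length 2 pi) is parametrized by the angle.\<close>

definition sph_design_S1 :: "nat \<Rightarrow> (real \<times> real) set \<Rightarrow> bool" where
  "sph_design_S1 t X \<longleftrightarrow> finite X \<and> X \<noteq> {} \<and>
     (\<forall>x\<in>X. (fst x)\<^sup>2 + (snd x)\<^sup>2 = 1) \<and>
     (\<forall>c. (\<Sum>x\<in>X. poly2 t c x) / real (card X)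
          = integral {0..2*pi} (\<lambda>\<theta>. poly2 t c (cos \<theta>, sin \<theta>)) / (2*pi))"

definition sph_design_radius :: "nat \<Rightarrow> real \<Rightarrow> (real \<times> real) set \<Rightarrow> bool" where
  "sph_design_radius t r X \<longleftrightarrow> r > 0 \<and> (\<forall>x\<in>X. (fst x)\<^sup>2 + (snd x)\<^sup>2 = r\<^sup>2) \<and>
     sph_design_S1 t ((\<lambda>x. (fst x / r, snd x / r)) ` X)"

definition shell :: "nat \<Rightarrow> (real \<times> real) set" where
  "shell m = (\<lambda>(a, b). (real_of_int a, real_of_int b)) `
               {p :: int \<times> int. (fst p)\<^sup>2 + (snd p)\<^sup>2 = int m}"

end

theory Submission
  imports Defs "HOL-Computational_Algebra.Primes" "HOL-Library.Discrete_Functions"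
begin

text \<open>Identify \<open>\<int>\<^sup>2\<close> with the Gaussian integers. A 4-design on the circle averages the
harmonic polynomials \<open>Re (z ^ 4)\<close> and \<open>Im (z ^ 4)\<close> to zero, so if the shell of norm \<open>m\<close>
were a 4-design, the sum \<open>T m\<close> of the fourth powers of its points would vanish. But \<open>T\<close> never
vanishes on a nonempty shell: \<open>T 1 = 4\<close>, \<open>T (2 * n) = -4 * T n\<close>, \<open>T (p\<^sup>2 * n) = p ^ 4 * T n\<close> when
the prime \<open>p\<close> divides both coordinates of every point, and otherwise \<open>p = \<pi> * cnj \<pi>\<close> splits, every
point of norm \<open>p ^ k * n\<close> with \<open>p\<close> not dividing \<open>n\<close> is uniquely \<open>\<pi> ^ s * cnj \<pi> ^ (k - s) * w\<close>
with \<open>w\<close> of norm \<open>n\<close>, and hence \<open>T (p ^ k * n) = (\<Sum>s\<le>k. (\<pi> ^ s * cnj \<pi> ^ (k - s)) ^ 4) * T n\<close>,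
where the factor is nonzero because modulo \<open>\<pi>\<close> only the term \<open>cnj \<pi> ^ (4 * k)\<close> survives.\<close>

section \<open>Shells of Gaussian integers\<close>

definition gauss_ints :: "complex set" where
  "gauss_ints = {z. Re z \<in> \<int> \<and> Im z \<in> \<int>}"

lemma Complex_of_int_in_gauss_ints [simp]: "Complex (of_int a) (of_int b) \<in> gauss_ints"
  by (simp add: gauss_ints_def)

lemma gauss_intsE:
  assumes "z \<in> gauss_ints"
  obtains a b :: int where "z = Complex (of_int a) (of_int b)"
proof -
  obtain a where "Re z = of_int a" using assms Ints_cases unfolding gauss_ints_def by auto
  moreover obtain b where "Im z = of_int b" using assms Ints_cases unfolding gauss_ints_def by auto
  ultimately show thesis using that[of a b] by (simp add: complex_eq_iff)
qed

lemma gauss_ints_mult: "z \<in> gauss_ints \<Longrightarrow> w \<in> gauss_ints \<Longrightarrow> z * w \<in> gauss_ints"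
  by (auto simp: gauss_ints_def)

lemma gauss_ints_power: "z \<in> gauss_ints \<Longrightarrow> z ^ n \<in> gauss_ints"
  by (induction n) (auto simp: gauss_ints_def)

lemma gauss_ints_cnj: "z \<in> gauss_ints \<Longrightarrow> cnj z \<in> gauss_ints"
  by (auto simp: gauss_ints_def)

lemma gauss_ints_sum: "(\<And>x. x \<in> A \<Longrightarrow> f x \<in> gauss_ints) \<Longrightarrow> sum f A \<in> gauss_ints"
  by (auto simp: gauss_ints_def)

definition gauss_shell :: "nat \<Rightarrow> complex set" where
  "gauss_shell m = {z \<in> gauss_ints. (cmod z)\<^sup>2 = real m}"

lemma Complex_of_int_in_gauss_shell_iff [simp]:
  "Complex (of_int a) (of_int b) \<in> gauss_shell m \<longleftrightarrow> a\<^sup>2 + b\<^sup>2 = int m"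
proof -
  have "(cmod (Complex (of_int a) (of_int b)))\<^sup>2 = real m \<longleftrightarrow>
        of_int (a\<^sup>2 + b\<^sup>2) = (of_int (int m) :: real)"
    by (simp add: cmod_power2)
  then show ?thesis
    by (simp add: gauss_shell_def del: of_int_add of_int_power) (metis of_int_eq_iff of_int_of_nat_eq)
qed

lemma gauss_shellE:
  assumes "z \<in> gauss_shell m"
  obtains a b :: int where "z = Complex (of_int a) (of_int b)" and "a\<^sup>2 + b\<^sup>2 = int m"
proof -
  obtain a b where z: "z = Complex (of_int a) (of_int b)"
    using assms gauss_intsE unfolding gauss_shell_def by blast
  with assms show thesis using that by simp
qed

lemma gauss_shell_mult:
  assumes "z \<in> gauss_shell m" "w \<in> gauss_shell n"
  shows "z * w \<in> gauss_shell (m * n)"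
  using assms unfolding gauss_shell_def by (simp add: gauss_ints_mult norm_mult power_mult_distrib)

lemma gauss_shell_power:
  assumes "z \<in> gauss_shell m"
  shows "z ^ k \<in> gauss_shell (m ^ k)"
proof (induction k)
  case 0
  then show ?case
    by (simp add: gauss_shell_def gauss_ints_def)
next
  case (Suc k)
  then show ?case
    using gauss_shell_mult[OF assms] by simp
qed

lemma gauss_shell_div:
  assumes "z * w \<in> gauss_shell (m * n)" "z \<in> gauss_shell m" "w \<in> gauss_ints" "m > 0"
  shows "w \<in> gauss_shell n"
  using assms unfolding gauss_shell_def by (simp add: norm_mult power_mult_distrib)

lemma gauss_shell_eq_shell: "gauss_shell m = (\<lambda>x. Complex (fst x) (snd x)) ` shell m"
proof (rule set_eqI)
  fix z
  show "z \<in> gauss_shell m \<longleftrightarrow> z \<in> (\<lambda>x. Complex (fst x) (snd x)) ` shell m"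
  proof
    assume "z \<in> gauss_shell m"
    then obtain a b where z: "z = Complex (of_int a) (of_int b)" and ab: "a\<^sup>2 + b\<^sup>2 = int m"
      by (rule gauss_shellE)
    have "(real_of_int a, real_of_int b) \<in> shell m"
      unfolding shell_def using ab by (intro image_eqI[of _ _ "(a, b)"]) simp_all
    with z show "z \<in> (\<lambda>x. Complex (fst x) (snd x)) ` shell m"
      by (intro image_eqI[of _ _ "(of_int a, of_int b)"]) simp_all
  next
    assume "z \<in> (\<lambda>x. Complex (fst x) (snd x)) ` shell m"
    then show "z \<in> gauss_shell m"
      unfolding shell_def by auto
  qed
qed

definition fourth_power_sum :: "nat \<Rightarrow> complex" where
  "fourth_power_sum m = (\<Sum>z\<in>gauss_shell m. z ^ 4)"

lemma fourth_power_sum_scale: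
  assumes "a \<noteq> 0" and "gauss_shell m = (\<lambda>w. a * w) ` gauss_shell n"
  shows "fourth_power_sum m = a ^ 4 * fourth_power_sum n"
proof -
  have "inj_on (\<lambda>w. a * w) (gauss_shell n)"
    using assms(1) by (auto intro: inj_onI)
  then show ?thesis
    unfolding fourth_power_sum_def assms(2)
    by (simp add: sum.reindex sum_distrib_left power_mult_distrib)
qed

lemma gauss_shell_1: "gauss_shell 1 = {1, -1, \<i>, -\<i>}"
proof
  show "gauss_shell 1 \<subseteq> {1, -1, \<i>, -\<i>}"
  proof
    fix z assume "z \<in> gauss_shell 1"
    then obtain a b where z: "z = Complex (of_int a) (of_int b)" and ab: "a\<^sup>2 + b\<^sup>2 = 1"
      by (auto elim: gauss_shellE)
    have "\<bar>a\<bar> \<le> 1" "\<bar>b\<bar> \<le> 1"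
      using ab abs_square_le_1[of a] abs_square_le_1[of b] zero_le_power2[of a] zero_le_power2[of b]
      by linarith+
    then have "a \<in> {-1, 0, 1}" "b \<in> {-1, 0, 1}" by auto
    with ab z show "z \<in> {1, -1, \<i>, -\<i>}" by (auto simp: complex_eq_iff)
  qed
next
  show "{1, -1, \<i>, -\<i>} \<subseteq> gauss_shell 1"
    using Complex_of_int_in_gauss_shell_iff[of 1 0 1] Complex_of_int_in_gauss_shell_iff[of "-1" 0 1]
      Complex_of_int_in_gauss_shell_iff[of 0 1 1] Complex_of_int_in_gauss_shell_iff[of 0 "-1" 1]
    by (simp add: Complex_eq)
qed

lemma fourth_power_sum_1: "fourth_power_sum 1 = 4"
  unfolding fourth_power_sum_def gauss_shell_1 by (simp add: complex_eq_iff)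

lemma gauss_shell_double: "gauss_shell (2 * n) = (\<lambda>w. (1 + \<i>) * w) ` gauss_shell n"
proof
  have "1 + \<i> \<in> gauss_shell 2"
    using Complex_of_int_in_gauss_shell_iff[of 1 1 2] by (simp add: Complex_eq)
  then show "(\<lambda>w. (1 + \<i>) * w) ` gauss_shell n \<subseteq> gauss_shell (2 * n)"
    using gauss_shell_mult by blast
  show "gauss_shell (2 * n) \<subseteq> (\<lambda>w. (1 + \<i>) * w) ` gauss_shell n"
  proof
    fix z assume z_shell: "z \<in> gauss_shell (2 * n)"
    then obtain a b where z: "z = Complex (of_int a) (of_int b)" and ab: "a\<^sup>2 + b\<^sup>2 = 2 * int n"
      by (rule gauss_shellE) simp
    then have "even (a + b)"
      by (metis dvd_triv_left even_add even_power zero_less_numeral)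
    then obtain s where s: "a + b = 2 * s" by blast
    define w where "w = Complex (of_int s) (of_int (s - a))"
    have "w \<in> gauss_ints"
      unfolding w_def by (rule Complex_of_int_in_gauss_ints)
    have "z = (1 + \<i>) * w"
      unfolding z w_def using s by (simp add: complex_eq_iff)
    moreover from this have "w \<in> gauss_shell n"
      using gauss_shell_div[of "1 + \<i>" w 2 n] z_shell \<open>1 + \<i> \<in> gauss_shell 2\<close> \<open>w \<in> gauss_ints\<close>
      by simp
    ultimately show "z \<in> (\<lambda>w. (1 + \<i>) * w) ` gauss_shell n" by blast
  qed
qed

lemma of_nat_in_gauss_shell: "of_nat p \<in> gauss_shell (p\<^sup>2)"
  using Complex_of_int_in_gauss_shell_iff[of "int p" 0 "p\<^sup>2"] by (simp add: Complex_eq)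

lemma sq_dvd_if_dvd_coords:
  assumes "Complex (of_int a) (of_int b) \<in> gauss_shell m" and "int p dvd a" and "int p dvd b"
  shows "p\<^sup>2 dvd m"
proof -
  have "int (p\<^sup>2) dvd a\<^sup>2 + b\<^sup>2"
    using assms(2,3) by (simp add: dvd_add)
  with assms(1) have "int (p\<^sup>2) dvd int m" by simp
  then show ?thesis by (simp only: int_dvd_int_iff)
qed

lemma gauss_shell_eq_scaled_if_dvd_coords:
  assumes "p > 0"
    and dvd: "\<And>a b. Complex (of_int a) (of_int b) \<in> gauss_shell (p\<^sup>2 * n) \<Longrightarrow> int p dvd a \<and> int p dvd b"
  shows "gauss_shell (p\<^sup>2 * n) = (\<lambda>w. of_nat p * w) ` gauss_shell n"
proof
  show "(\<lambda>w. of_nat p * w) ` gauss_shell n \<subseteq> gauss_shell (p\<^sup>2 * n)"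
    using gauss_shell_mult of_nat_in_gauss_shell by blast
  show "gauss_shell (p\<^sup>2 * n) \<subseteq> (\<lambda>w. of_nat p * w) ` gauss_shell n"
  proof
    fix z assume z_shell: "z \<in> gauss_shell (p\<^sup>2 * n)"
    then obtain a b where z: "z = Complex (of_int a) (of_int b)"
      by (rule gauss_shellE)
    obtain s t where "a = int p * s" "b = int p * t"
      using dvd z z_shell by blast
    define w where "w = Complex (of_int s) (of_int t)"
    have "w \<in> gauss_ints"
      unfolding w_def by (rule Complex_of_int_in_gauss_ints)
    have "z = of_nat p * w"
      unfolding z w_def \<open>a = int p * s\<close> \<open>b = int p * t\<close> by (simp add: complex_eq_iff)
    moreover from this have "w \<in> gauss_shell n"
      using gauss_shell_div[OF _ of_nat_in_gauss_shell \<open>w \<in> gauss_ints\<close>] z_shell assms(1)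
      by simp
    ultimately show "z \<in> (\<lambda>w. of_nat p * w) ` gauss_shell n" by blast
  qed
qed

section \<open>Primes that are sums of two squares\<close>

lemma thue_lemma:
  fixes a b :: int and k p :: nat
  assumes "p > 0" and "p < (k + 1)\<^sup>2"
  shows "\<exists>x y. (x, y) \<noteq> (0, 0) \<and> \<bar>x\<bar> \<le> int k \<and> \<bar>y\<bar> \<le> int k \<and> int p dvd b * x - a * y"
proof -
  define S where "S = {0..int k} \<times> {0..int k}"
  define f where "f = (\<lambda>(x, y). (b * x - a * y) mod int p)"
  have "\<not> inj_on f S"
  proof
    assume "inj_on f S"
    have "f ` S \<subseteq> {0..<int p}"
      unfolding f_def using assms(1) by auto
    then have "card (f ` S) \<le> p"
      using card_mono[of "{0..<int p}"] by fastforce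
    moreover have "card S = (k + 1)\<^sup>2"
      unfolding S_def by (simp add: card_cartesian_product power2_eq_square nat_add_distrib)
    ultimately show False
      using card_image[OF \<open>inj_on f S\<close>] assms by simp
  qed
  then obtain x1 y1 x2 y2 where "(x1, y1) \<in> S" "(x2, y2) \<in> S" "(x1, y1) \<noteq> (x2, y2)"
    and "f (x1, y1) = f (x2, y2)"
    unfolding inj_on_def by auto
  then show ?thesis
    unfolding S_def f_def
    by (intro exI[of _ "x1 - x2"] exI[of _ "y1 - y2"])
       (auto simp: mod_eq_dvd_iff algebra_simps)
qed

lemma prime_sum_two_squares_if_dvd:
  fixes a b :: int
  assumes "prime p" and "\<not> int p dvd b" and "int p dvd a\<^sup>2 + b\<^sup>2"
  shows "\<exists>u r. u\<^sup>2 + r\<^sup>2 = int p"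
proof -
  have P: "prime (int p)" using assms(1) by simp
  define k where "k = floor_sqrt p"
  have "k\<^sup>2 \<noteq> p"
    using \<open>prime p\<close> by (auto simp: prime_power_iff)
  then have k_less: "(int k)\<^sup>2 < int p"
    using floor_sqrt_power2_le[of p] unfolding k_def by (metis le_neq_implies_less of_nat_less_iff of_nat_power)
  obtain x y where "(x, y) \<noteq> (0, 0)" "\<bar>x\<bar> \<le> int k" "\<bar>y\<bar> \<le> int k" and dvd: "int p dvd b * x - a * y"
    using thue_lemma[where p=p and k=k and a=a and b=b] prime_gt_0_nat[OF assms(1)] Suc_floor_sqrt_power2_gt[of p] unfolding k_def by auto
  have "b\<^sup>2 * (x\<^sup>2 + y\<^sup>2) = (b * x - a * y) * (b * x + a * y) + y\<^sup>2 * (a\<^sup>2 + b\<^sup>2)"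
    by (simp add: power2_eq_square algebra_simps)
  then have "int p dvd b\<^sup>2 * (x\<^sup>2 + y\<^sup>2)"
    using dvd assms(3) by simp
  moreover have "\<not> int p dvd b\<^sup>2"
    using P assms(2) prime_dvd_power by blast
  ultimately obtain t where t: "x\<^sup>2 + y\<^sup>2 = int p * t"
    using P prime_dvd_mult_iff by blast
  have "0 < x\<^sup>2 + y\<^sup>2"
    using \<open>(x, y) \<noteq> (0, 0)\<close> by (simp add: sum_power2_gt_zero_iff)
  moreover have "x\<^sup>2 \<le> (int k)\<^sup>2" "y\<^sup>2 \<le> (int k)\<^sup>2"
    using \<open>\<bar>x\<bar> \<le> int k\<close> \<open>\<bar>y\<bar> \<le> int k\<close> by (metis abs_le_square_iff abs_of_nat)+
  with k_less have "x\<^sup>2 + y\<^sup>2 < 2 * int p"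
    by linarith
  moreover have "int p > 0"
    using assms(1) prime_gt_0_nat by simp
  ultimately have "0 < t" and "int p * t < int p * 2"
    unfolding t by (simp_all add: zero_less_mult_iff mult.commute)
  then have "t = 1"
    using \<open>int p > 0\<close> by simp
  with t show ?thesis by auto
qed

lemma prime_not_dvd_sum_squares_summand:
  fixes P u r :: int
  assumes "prime P" and P: "u\<^sup>2 + r\<^sup>2 = P"
  shows "\<not> P dvd r"
proof
  assume "P dvd r"
  then have "P dvd P - r\<^sup>2"
    by (simp add: power2_eq_square)
  moreover have "u\<^sup>2 = P - r\<^sup>2"
    using P by linarith
  ultimately have "P dvd u\<^sup>2"
    by simp
  then have "P dvd u"
    using assms(1) prime_dvd_power by blast
  with \<open>P dvd r\<close> have "P * P dvd P * 1"
    unfolding P[symmetric] by (simp add: power2_eq_square mult_dvd_mono)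
  then have "P dvd 1"
    using assms(1) by simp
  then show False
    using assms(1) not_prime_unit by blast
qed

lemma gauss_factor_if_dvd:
  fixes a b u r P :: int
  assumes "prime P" and P: "u\<^sup>2 + r\<^sup>2 = P" and "P dvd a * u + b * r" and "P dvd a\<^sup>2 + b\<^sup>2"
  shows "\<exists>y\<in>gauss_ints. Complex (of_int a) (of_int b) = Complex (of_int u) (of_int r) * y"
proof -
  have "(b * u - a * r)\<^sup>2 = P * (a\<^sup>2 + b\<^sup>2) - (a * u + b * r)\<^sup>2"
    unfolding P[symmetric] by (simp add: power2_eq_square algebra_simps)
  moreover have "P\<^sup>2 dvd P * (a\<^sup>2 + b\<^sup>2)"
    using assms(4) by (simp add: power2_eq_square)
  moreover have "P\<^sup>2 dvd (a * u + b * r)\<^sup>2"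
    using assms(3) by (rule dvd_power_same)
  ultimately have "P\<^sup>2 dvd (b * u - a * r)\<^sup>2"
    by (simp add: dvd_diff)
  then have "P dvd (b * u - a * r)\<^sup>2"
    by (rule dvd_trans[rotated]) (simp add: dvd_power)
  then have "P dvd b * u - a * r"
    using assms(1) prime_dvd_power by blast
  have "P \<noteq> 0"
    using assms(1) by auto
  obtain s where s: "a * u + b * r = P * s"
    using assms(3) by blast
  obtain t where t: "b * u - a * r = P * t"
    using \<open>P dvd b * u - a * r\<close> by blast
  have "P * (u * s - r * t) = u * (a * u + b * r) - r * (b * u - a * r)"
    unfolding s t by (simp add: algebra_simps)
  also have "\<dots> = P * a"
    unfolding P[symmetric] by (simp add: power2_eq_square algebra_simps)
  finally have a: "u * s - r * t = a"
    using \<open>P \<noteq> 0\<close> by simp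
  have "P * (u * t + r * s) = u * (b * u - a * r) + r * (a * u + b * r)"
    unfolding s t by (simp add: algebra_simps)
  also have "\<dots> = P * b"
    unfolding P[symmetric] by (simp add: power2_eq_square algebra_simps)
  finally have b: "u * t + r * s = b"
    using \<open>P \<noteq> 0\<close> by simp
  have "Complex (of_int u) (of_int r) * Complex (of_int s) (of_int t) =
        Complex (of_int (u * s - r * t)) (of_int (u * t + r * s))"
    by (simp add: complex_eq_iff)
  then show ?thesis
    unfolding a b by (metis Complex_of_int_in_gauss_ints)
qed

section \<open>Shells of norm divisible by a split prime\<close>

locale split_prime =
  fixes p :: nat and u r :: int
  assumes prime: "prime p" and sum_squares: "u\<^sup>2 + r\<^sup>2 = int p"
begin

lemma prime_int: "prime (int p)"
  using prime by simp

lemma not_dvd_r: "\<not> int p dvd r"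
  using prime_not_dvd_sum_squares_summand[OF prime_int sum_squares] .

lemma not_dvd_u: "\<not> int p dvd u"
  using prime_not_dvd_sum_squares_summand[OF prime_int, of r u] sum_squares by (simp add: add.commute)

definition gprime :: complex where
  "gprime = Complex (of_int u) (of_int r)"

lemma gprime_in_gauss_shell: "gprime \<in> gauss_shell p"
  unfolding gprime_def using sum_squares by simp

lemma cnj_gprime_in_gauss_shell: "cnj gprime \<in> gauss_shell p"
  using gprime_in_gauss_shell by (simp add: gauss_shell_def gauss_ints_cnj)

lemma gauss_shell_split:
  assumes "z \<in> gauss_shell (p * n)"
  obtains y where "y \<in> gauss_shell n" and "z = gprime * y \<or> z = cnj gprime * y"
proof -
  obtain a b where z: "z = Complex (of_int a) (of_int b)" and "a\<^sup>2 + b\<^sup>2 = int (p * n)"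
    using assms by (rule gauss_shellE)
  then have dvd: "int p dvd a\<^sup>2 + b\<^sup>2"
    by simp
  have "(a * u + b * r) * (a * u + b * (- r)) = a\<^sup>2 * int p - r\<^sup>2 * (a\<^sup>2 + b\<^sup>2)"
    unfolding sum_squares[symmetric] by (simp add: power2_eq_square algebra_simps)
  with dvd have "int p dvd (a * u + b * r) * (a * u + b * (- r))"
    by simp
  then have "int p dvd a * u + b * r \<or> int p dvd a * u + b * (- r)"
    by (rule prime_dvd_multD[OF prime_int])
  then obtain g y where g: "g \<in> gauss_shell p" and "y \<in> gauss_ints" and zy: "z = g * y"
    and "g = gprime \<or> g = cnj gprime"
  proof
    assume "int p dvd a * u + b * r"
    with gauss_factor_if_dvd[OF prime_int sum_squares _ dvd] z
    show thesis
      using that gprime_in_gauss_shell unfolding gprime_def by blast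
  next
    assume "int p dvd a * u + b * (- r)"
    moreover have "u\<^sup>2 + (- r)\<^sup>2 = int p"
      using sum_squares by simp
    moreover have "Complex (of_int u) (of_int (- r)) = cnj gprime"
      unfolding gprime_def by (simp add: complex_eq_iff)
    ultimately show thesis
      using gauss_factor_if_dvd[OF prime_int _ _ dvd] z that cnj_gprime_in_gauss_shell by metis
  qed
  moreover have "y \<in> gauss_shell n"
    using gauss_shell_div[of g y p n] assms g \<open>y \<in> gauss_ints\<close> zy prime_gt_0_nat[OF prime] by simp
  ultimately show thesis
    using that by blast
qed

text \<open>Reduction modulo \<open>gprime\<close>, i.e. the ring homomorphism from the Gaussian integers onto
\<open>\<int>/p\<close> sending \<open>\<i>\<close> to \<open>-u/r\<close>, multiplied by \<open>r\<close> to stay inside the integers.\<close>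

definition residue :: "complex \<Rightarrow> int" where
  "residue z = \<lfloor>Re z\<rfloor> * r - \<lfloor>Im z\<rfloor> * u"

lemma residue_Complex [simp]: "residue (Complex (of_int a) (of_int b)) = a * r - b * u"
  by (simp add: residue_def)

lemma residue_add:
  assumes "z \<in> gauss_ints" and "w \<in> gauss_ints"
  shows "residue (z + w) = residue z + residue w"
  using assms by (elim gauss_intsE) (simp add: residue_def algebra_simps)

lemma residue_sum:
  "(\<And>x. x \<in> A \<Longrightarrow> f x \<in> gauss_ints) \<Longrightarrow> residue (sum f A) = (\<Sum>x\<in>A. residue (f x))"
proof (induction A rule: infinite_finite_induct)
  case (insert x A)
  then show ?case
    by (simp add: residue_add gauss_ints_sum)
qed (simp_all add: residue_def)

lemma residue_mult:
  assumes "z \<in> gauss_ints" and "w \<in> gauss_ints"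
  shows "int p dvd residue (z * w) * r - residue z * residue w"
proof -
  obtain a b c d where z: "z = Complex (of_int a) (of_int b)" and w: "w = Complex (of_int c) (of_int d)"
    using assms by (metis gauss_intsE)
  have "z * w = Complex (of_int (a * c - b * d)) (of_int (a * d + b * c))"
    unfolding z w by (simp add: complex_eq_iff)
  then have zw: "residue (z * w) = (a * c - b * d) * r - (a * d + b * c) * u"
    by (simp only: residue_Complex)
  have "residue (z * w) * r - residue z * residue w = - (b * d) * int p"
    unfolding zw unfolding z w residue_Complex sum_squares[symmetric] by (simp add: power2_eq_square algebra_simps)
  then show ?thesis
    by simp
qed

lemma dvd_residue_mult_iff:
  assumes "z \<in> gauss_ints" and "w \<in> gauss_ints"
  shows "int p dvd residue (z * w) \<longleftrightarrow> int p dvd residue z \<or> int p dvd residue w"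
proof -
  have "int p dvd residue (z * w) \<longleftrightarrow> int p dvd residue (z * w) * r"
    using prime_dvd_mult_iff[OF prime_int] not_dvd_r by simp
  also have "\<dots> \<longleftrightarrow> int p dvd residue z * residue w"
    using dvd_add_right_iff[OF residue_mult[OF assms], of "residue z * residue w"]
    by (simp only: diff_add_cancel)
  also have "\<dots> \<longleftrightarrow> int p dvd residue z \<or> int p dvd residue w"
    by (rule prime_dvd_mult_iff[OF prime_int])
  finally show ?thesis .
qed

lemma dvd_residue_power_iff:
  assumes "z \<in> gauss_ints"
  shows "int p dvd residue (z ^ n) \<longleftrightarrow> n > 0 \<and> int p dvd residue z"
proof (induction n)
  case 0
  have "residue 1 = r"
    using residue_Complex[of 1 0] by (simp add: Complex_eq)
  then show ?case
    using not_dvd_r by simp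
next
  case (Suc n)
  then show ?case
    using dvd_residue_mult_iff[OF assms gauss_ints_power[OF assms]] by auto
qed

lemma residue_gprime: "residue gprime = 0"
  by (simp add: gprime_def)

lemma not_dvd_residue_cnj_gprime:
  assumes "p \<noteq> 2"
  shows "\<not> int p dvd residue (cnj gprime)"
proof
  assume "int p dvd residue (cnj gprime)"
  moreover have "cnj gprime = Complex (of_int u) (of_int (- r))"
    by (simp add: gprime_def complex_eq_iff)
  ultimately have "int p dvd u * r - (- r) * u"
    by (simp only: residue_Complex)
  then have "int p dvd 2 * (u * r)"
    by (simp add: algebra_simps)
  moreover have "\<not> int p dvd 2"
  proof
    assume "int p dvd 2"
    then have "p dvd 2"
      using int_dvd_int_iff[of p 2] by simp
    then have "p \<le> 2"
      by (rule dvd_imp_le) simp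
    with assms prime_ge_2_nat[OF prime] show False
      by simp
  qed
  ultimately have "int p dvd u * r"
    using prime_dvd_multD[OF prime_int] by blast
  then show False
    using prime_dvd_multD[OF prime_int] not_dvd_u not_dvd_r by blast
qed

lemma not_dvd_residue_if_not_dvd_norm:
  assumes "z \<in> gauss_shell n" and "\<not> p dvd n"
  shows "\<not> int p dvd residue z"
proof
  assume dvd: "int p dvd residue z"
  obtain a b where z: "z = Complex (of_int a) (of_int b)" and ab: "a\<^sup>2 + b\<^sup>2 = int n"
    using assms(1) by (rule gauss_shellE)
  have "r\<^sup>2 * int n = residue z * (a * r + b * u) + b\<^sup>2 * int p"
    unfolding z ab[symmetric] sum_squares[symmetric] by (simp add: power2_eq_square algebra_simps)
  with dvd have "int p dvd r\<^sup>2 * int n"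
    by simp
  then have "int p dvd r\<^sup>2 \<or> int p dvd int n"
    by (rule prime_dvd_multD[OF prime_int])
  moreover have "\<not> int p dvd r\<^sup>2"
    using not_dvd_r prime_int prime_dvd_power by blast
  ultimately show False
    using assms(2) by simp
qed

lemma gprime_nonzero: "gprime \<noteq> 0"
  using gprime_in_gauss_shell prime_gt_0_nat[OF prime] by (auto simp: gauss_shell_def)

lemma gauss_shell_prime_power_cases:
  assumes "z \<in> gauss_shell (p ^ k * n)"
  shows "\<exists>s\<le>k. \<exists>w\<in>gauss_shell n. z = gprime ^ s * cnj gprime ^ (k - s) * w"
  using assms
proof (induction k arbitrary: z)
  case 0
  then show ?case by auto
next
  case (Suc k)
  then have "z \<in> gauss_shell (p * (p ^ k * n))"
    by (simp add: mult.assoc)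
  then obtain y where "y \<in> gauss_shell (p ^ k * n)" and zy: "z = gprime * y \<or> z = cnj gprime * y"
    by (rule gauss_shell_split)
  then obtain s w where "s \<le> k" "w \<in> gauss_shell n" and y: "y = gprime ^ s * cnj gprime ^ (k - s) * w"
    using Suc.IH by blast
  from zy show ?case
  proof
    assume "z = gprime * y"
    then have "z = gprime ^ Suc s * cnj gprime ^ (Suc k - Suc s) * w"
      unfolding y by (simp add: algebra_simps)
    with \<open>s \<le> k\<close> \<open>w \<in> gauss_shell n\<close> show ?case
      by (intro exI[of _ "Suc s"]) auto
  next
    assume "z = cnj gprime * y"
    then have "z = gprime ^ s * cnj gprime ^ (Suc k - s) * w"
      unfolding y using \<open>s \<le> k\<close> by (simp add: Suc_diff_le algebra_simps)
    with \<open>s \<le> k\<close> \<open>w \<in> gauss_shell n\<close> show ?case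
      by (intro exI[of _ s]) auto
  qed
qed

lemma gauss_shell_prime_power:
  "gauss_shell (p ^ k * n) = (\<lambda>(s, w). gprime ^ s * cnj gprime ^ (k - s) * w) ` ({..k} \<times> gauss_shell n)"
proof
  show "gauss_shell (p ^ k * n) \<subseteq> (\<lambda>(s, w). gprime ^ s * cnj gprime ^ (k - s) * w) ` ({..k} \<times> gauss_shell n)"
    using gauss_shell_prime_power_cases by fastforce
  show "(\<lambda>(s, w). gprime ^ s * cnj gprime ^ (k - s) * w) ` ({..k} \<times> gauss_shell n) \<subseteq> gauss_shell (p ^ k * n)"
  proof clarify
    fix s w assume "s \<le> k" and w: "w \<in> gauss_shell n"
    have "gprime ^ s * cnj gprime ^ (k - s) \<in> gauss_shell (p ^ s * p ^ (k - s))"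
      by (intro gauss_shell_mult gauss_shell_power gprime_in_gauss_shell cnj_gprime_in_gauss_shell)
    with \<open>s \<le> k\<close> have "gprime ^ s * cnj gprime ^ (k - s) \<in> gauss_shell (p ^ k)"
      by (simp flip: power_add)
    then show "gprime ^ s * cnj gprime ^ (k - s) * w \<in> gauss_shell (p ^ k * n)"
      using w by (rule gauss_shell_mult)
  qed
qed

text \<open>The residue of the right-hand side is divisible by \<open>p\<close>, that of the left-hand side is not
(this is where \<open>p\<close> odd is needed).\<close>

lemma cnj_gprime_power_mult_neq:
  assumes "p \<noteq> 2" and "\<not> p dvd n" and "j > 0"
    and "w \<in> gauss_shell n" and "w' \<in> gauss_shell n"
  shows "cnj gprime ^ j * w \<noteq> gprime ^ j * w'"
proof -
  have gauss: "gprime \<in> gauss_ints" "cnj gprime \<in> gauss_ints" "w \<in> gauss_ints" "w' \<in> gauss_ints"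
    using gprime_in_gauss_shell cnj_gprime_in_gauss_shell assms(4,5) by (auto simp: gauss_shell_def)
  have "int p dvd residue (gprime ^ j * w')"
    using assms(3) gauss by (simp add: dvd_residue_mult_iff dvd_residue_power_iff gauss_ints_power residue_gprime)
  moreover have "\<not> int p dvd residue (cnj gprime ^ j * w)"
    using gauss not_dvd_residue_cnj_gprime[OF assms(1)] not_dvd_residue_if_not_dvd_norm[OF assms(4,2)]
    by (simp add: dvd_residue_mult_iff dvd_residue_power_iff gauss_ints_power)
  ultimately show ?thesis
    by auto
qed

lemma inj_on_prime_power_decomposition:
  assumes "p \<noteq> 2" and "\<not> p dvd n"
  shows "inj_on (\<lambda>(s, w). gprime ^ s * cnj gprime ^ (k - s) * w) ({..k} \<times> gauss_shell n)"
proof -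
  have neq: "gprime ^ s * cnj gprime ^ (k - s) * w \<noteq> gprime ^ s' * cnj gprime ^ (k - s') * w'"
    if "s < s'" "s' \<le> k" "w \<in> gauss_shell n" "w' \<in> gauss_shell n" for s s' w w'
  proof
    assume eq: "gprime ^ s * cnj gprime ^ (k - s) * w = gprime ^ s' * cnj gprime ^ (k - s') * w'"
    define j where "j = s' - s"
    have "s' = s + j" "k - s = (k - s') + j"
      using that unfolding j_def by auto
    with eq have "(gprime ^ s * cnj gprime ^ (k - s')) * (cnj gprime ^ j * w)
        = (gprime ^ s * cnj gprime ^ (k - s')) * (gprime ^ j * w')"
      by (simp add: power_add algebra_simps)
    then have "cnj gprime ^ j * w = gprime ^ j * w'"
      using gprime_nonzero by simp
    with cnj_gprime_power_mult_neq[OF assms] that show False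
      unfolding j_def by simp
  qed
  show ?thesis
  proof (rule inj_onI)
    fix x y
    assume x: "x \<in> {..k} \<times> gauss_shell n" and y: "y \<in> {..k} \<times> gauss_shell n"
      and xy: "(\<lambda>(s, w). gprime ^ s * cnj gprime ^ (k - s) * w) x =
               (\<lambda>(s, w). gprime ^ s * cnj gprime ^ (k - s) * w) y"
    obtain s w s' w' where "x = (s, w)" and "y = (s', w')"
      by (cases x, cases y)
    with x y xy have "s \<le> k" "s' \<le> k" "w \<in> gauss_shell n" "w' \<in> gauss_shell n"
      and eq: "gprime ^ s * cnj gprime ^ (k - s) * w = gprime ^ s' * cnj gprime ^ (k - s') * w'"
      by auto
    then have "s = s'"
      using neq[of s s' w w'] neq[of s' s w' w] by (cases s s' rule: linorder_cases) auto
    with eq gprime_nonzero have "w = w'"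
      by simp
    with \<open>s = s'\<close> \<open>x = (s, w)\<close> \<open>y = (s', w')\<close> show "x = y"
      by simp
  qed
qed

lemma fourth_power_sum_prime_power:
  assumes "p \<noteq> 2" and "\<not> p dvd n"
  shows "fourth_power_sum (p ^ k * n) =
    (\<Sum>s\<le>k. (gprime ^ s * cnj gprime ^ (k - s)) ^ 4) * fourth_power_sum n"
proof -
  have "fourth_power_sum (p ^ k * n) =
      (\<Sum>(s, w)\<in>{..k} \<times> gauss_shell n. (gprime ^ s * cnj gprime ^ (k - s) * w) ^ 4)"
    unfolding fourth_power_sum_def gauss_shell_prime_power
    by (subst sum.reindex[OF inj_on_prime_power_decomposition[OF assms]]) (simp add: case_prod_unfold)
  also have "\<dots> = (\<Sum>s\<le>k. \<Sum>w\<in>gauss_shell n. (gprime ^ s * cnj gprime ^ (k - s) * w) ^ 4)"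
    by (rule sum.cartesian_product[symmetric])
  also have "\<dots> = (\<Sum>s\<le>k. (gprime ^ s * cnj gprime ^ (k - s)) ^ 4 * fourth_power_sum n)"
    unfolding fourth_power_sum_def sum_distrib_left power_mult_distrib[of _ "w" 4 for w] ..
  also have "\<dots> = (\<Sum>s\<le>k. (gprime ^ s * cnj gprime ^ (k - s)) ^ 4) * fourth_power_sum n"
    by (rule sum_distrib_right[symmetric])
  finally show ?thesis .
qed

lemma fourth_power_sum_prime_power_factor_nonzero:
  assumes "p \<noteq> 2"
  shows "(\<Sum>s\<le>k. (gprime ^ s * cnj gprime ^ (k - s)) ^ 4) \<noteq> 0"
proof
  define f where "f s = (gprime ^ s * cnj gprime ^ (k - s)) ^ 4" for s
  have gauss: "gprime \<in> gauss_ints" "cnj gprime \<in> gauss_ints" "f s \<in> gauss_ints" for s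
    using gprime_in_gauss_shell cnj_gprime_in_gauss_shell unfolding f_def
    by (auto simp: gauss_shell_def intro: gauss_ints_mult gauss_ints_power)
  assume "(\<Sum>s\<le>k. (gprime ^ s * cnj gprime ^ (k - s)) ^ 4) = 0"
  moreover have "(\<Sum>s\<le>k. (gprime ^ s * cnj gprime ^ (k - s)) ^ 4) = f 0 + (\<Sum>s\<in>{..k} - {0}. f s)"
    using sum.remove[of "{..k}" 0 f] by (simp add: f_def)
  moreover have "residue 0 = 0"
    by (simp add: residue_def)
  ultimately have "residue (f 0 + (\<Sum>s\<in>{..k} - {0}. f s)) = 0"
    by simp
  then have sum0: "residue (f 0) + residue (\<Sum>s\<in>{..k} - {0}. f s) = 0"
    by (simp only: residue_add[OF gauss(3) gauss_ints_sum[OF gauss(3)]])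
  moreover have "int p dvd residue (\<Sum>s\<in>{..k} - {0}. f s)"
    unfolding residue_sum[OF gauss(3)]
  proof (rule dvd_sum)
    fix s assume "s \<in> {..k} - {0}"
    then have "int p dvd residue (gprime ^ s * cnj gprime ^ (k - s))"
      using gauss by (simp add: dvd_residue_mult_iff dvd_residue_power_iff gauss_ints_power residue_gprime)
    then show "int p dvd residue (f s)"
      unfolding f_def using gauss by (simp add: dvd_residue_power_iff gauss_ints_mult gauss_ints_power)
  qed
  moreover have "\<not> int p dvd residue (f 0)"
    using gauss not_dvd_residue_cnj_gprime[OF assms]
    by (simp add: f_def dvd_residue_power_iff gauss_ints_power)
  moreover have "residue (f 0) = - residue (\<Sum>s\<in>{..k} - {0}. f s)"
    using sum0 by linarith
  ultimately show False
    by simp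
qed

end

section \<open>The fourth power sum does not vanish\<close>

lemma fourth_power_sum_double: "fourth_power_sum (2 * n) = - 4 * fourth_power_sum n"
proof -
  have "1 + \<i> \<noteq> 0" and "(1 + \<i>) ^ 4 = (-4 :: complex)"
    by (simp_all add: complex_eq_iff eval_nat_numeral)
  then show ?thesis
    using fourth_power_sum_scale[OF _ gauss_shell_double] by simp
qed

lemma fourth_power_sum_reduction_common_factor:
  assumes "prime p" and "m > 0" and "z \<in> gauss_shell m"
    and dvd: "\<And>a b. Complex (of_int a) (of_int b) \<in> gauss_shell m \<Longrightarrow> int p dvd a \<and> int p dvd b"
  shows "\<exists>n. 0 < n \<and> n < m \<and> gauss_shell n \<noteq> {} \<and>
    fourth_power_sum m = of_nat p ^ 4 * fourth_power_sum n"
proof -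
  obtain a b where "Complex (of_int a) (of_int b) \<in> gauss_shell m"
    using assms(3) by (metis gauss_shellE Complex_of_int_in_gauss_shell_iff)
  then have "p\<^sup>2 dvd m"
    using dvd sq_dvd_if_dvd_coords by blast
  then obtain n where m: "m = p\<^sup>2 * n"
    by blast
  have "p > 1"
    using assms(1) prime_gt_1_nat by blast
  then have "p\<^sup>2 > 1"
    by (rule one_less_power) simp
  then have "0 < n" "n < m"
    using assms(2) unfolding m by auto
  moreover have shell: "gauss_shell m = (\<lambda>w. of_nat p * w) ` gauss_shell n"
    unfolding m using dvd \<open>p > 1\<close> by (intro gauss_shell_eq_scaled_if_dvd_coords) (auto simp: m)
  moreover have "gauss_shell n \<noteq> {}"
    using assms(3) shell by auto
  moreover have "fourth_power_sum m = of_nat p ^ 4 * fourth_power_sum n"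
    using fourth_power_sum_scale[OF _ shell] \<open>p > 1\<close> by simp
  ultimately show ?thesis
    by blast
qed

lemma fourth_power_sum_reduction_split_prime:
  assumes "prime p" and "p \<noteq> 2" and "p dvd m" and "m > 0"
    and ab: "Complex (of_int a) (of_int b) \<in> gauss_shell m" and "\<not> int p dvd b"
  shows "\<exists>n c. 0 < n \<and> n < m \<and> gauss_shell n \<noteq> {} \<and> c \<noteq> 0 \<and>
    fourth_power_sum m = c * fourth_power_sum n"
proof -
  have "int p dvd a\<^sup>2 + b\<^sup>2"
    using ab assms(3) by simp
  then obtain u r where "u\<^sup>2 + r\<^sup>2 = int p"
    using prime_sum_two_squares_if_dvd[OF assms(1,6)] by blast
  then interpret split_prime p u r
    using assms(1) by unfold_locales
  obtain n where m: "m = p ^ multiplicity p m * n" and "\<not> p dvd n"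
    by (rule multiplicity_decompose'[of m p]) (use assms(1,4) not_prime_unit in auto)
  define k where "k = multiplicity p m"
  have "k > 0"
    unfolding k_def using assms(1,3,4) by (simp add: prime_multiplicity_gt_zero_iff)
  have "p ^ k > 1"
    using prime_gt_1_nat[OF assms(1)] \<open>k > 0\<close> by (rule one_less_power)
  then have "0 < n" "n < m"
    using assms(4) m unfolding k_def[symmetric] by (auto intro: le_less_trans[of _ "1 * n"])
  moreover have "gauss_shell n \<noteq> {}"
    using ab gauss_shell_prime_power[of k n] m unfolding k_def[symmetric] by auto
  moreover have "fourth_power_sum m = (\<Sum>s\<le>k. (gprime ^ s * cnj gprime ^ (k - s)) ^ 4) * fourth_power_sum n"
    using fourth_power_sum_prime_power[OF assms(2) \<open>\<not> p dvd n\<close>] m unfolding k_def[symmetric] by simp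
  ultimately show ?thesis
    using fourth_power_sum_prime_power_factor_nonzero[OF assms(2)] by blast
qed

lemma not_dvd_right_if_dvd_sum_squares:
  fixes P a b :: int
  assumes "prime P" and "P dvd a\<^sup>2 + b\<^sup>2" and "\<not> (P dvd a \<and> P dvd b)"
  shows "\<not> P dvd b"
proof
  assume "P dvd b"
  then have "P dvd b\<^sup>2"
    by (simp add: power2_eq_square)
  with assms(2) have "P dvd a\<^sup>2"
    by (simp add: dvd_add_left_iff)
  then have "P dvd a"
    using assms(1) prime_dvd_power by blast
  with \<open>P dvd b\<close> assms(3) show False
    by blast
qed

lemma fourth_power_sum_reduction:
  assumes "m > 1" and "gauss_shell m \<noteq> {}"
  shows "\<exists>n c. 0 < n \<and> n < m \<and> gauss_shell n \<noteq> {} \<and> c \<noteq> 0 \<and>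
    fourth_power_sum m = c * fourth_power_sum n"
proof -
  obtain p where p: "prime p" "p dvd m"
    using assms(1) prime_factor_nat[of m] by auto
  obtain z where z: "z \<in> gauss_shell m"
    using assms(2) by blast
  consider "p = 2"
    | "\<And>a b. Complex (of_int a) (of_int b) \<in> gauss_shell m \<Longrightarrow> int p dvd a \<and> int p dvd b"
    | a b where "p \<noteq> 2" "Complex (of_int a) (of_int b) \<in> gauss_shell m" "\<not> (int p dvd a \<and> int p dvd b)"
    by blast
  then show ?thesis
  proof cases
    case 1
    then obtain n where m: "m = 2 * n"
      using p(2) by blast
    have "gauss_shell n \<noteq> {}"
      using assms(2) gauss_shell_double unfolding m by auto
    moreover have "0 < n" "n < m"
      using assms(1) m by auto
    ultimately show ?thesis
      using fourth_power_sum_double m by (intro exI[of _ n] exI[of _ "- 4"]) auto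
  next
    case 2
    then obtain n where "0 < n" "n < m" "gauss_shell n \<noteq> {}"
      and "fourth_power_sum m = of_nat p ^ 4 * fourth_power_sum n"
      using fourth_power_sum_reduction_common_factor[OF p(1) _ z] assms(1) by auto
    moreover have "(of_nat p :: complex) ^ 4 \<noteq> 0"
      using p(1) by simp
    ultimately show ?thesis
      by blast
  next
    case (3 a b)
    have "int p dvd a\<^sup>2 + b\<^sup>2"
      using 3(2) p(2) by simp
    moreover have "prime (int p)"
      using p(1) by simp
    ultimately have "\<not> int p dvd b"
      using 3(3) not_dvd_right_if_dvd_sum_squares by blast
    with fourth_power_sum_reduction_split_prime[OF p(1) 3(1) p(2) _ 3(2)] assms(1) show ?thesis
      by simp
  qed
qed

lemma fourth_power_sum_nonzero:
  assumes "m > 0" and "gauss_shell m \<noteq> {}"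
  shows "fourth_power_sum m \<noteq> 0"
  using assms
proof (induction m rule: less_induct)
  case (less m)
  show ?case
  proof (cases "m = 1")
    case True
    then show ?thesis
      by (metis fourth_power_sum_1 zero_neq_numeral)
  next
    case False
    with less.prems obtain n c where "0 < n" "n < m" "gauss_shell n \<noteq> {}" "c \<noteq> 0"
      and "fourth_power_sum m = c * fourth_power_sum n"
      using fourth_power_sum_reduction[of m] by auto
    with less.IH show ?thesis
      by simp
  qed
qed

section \<open>Fourth powers and 4-designs on the circle\<close>

definition fourth_power_Re_coeffs :: "nat \<Rightarrow> nat \<Rightarrow> real" where
  "fourth_power_Re_coeffs i j =
     (if (i, j) = (4, 0) \<or> (i, j) = (0, 4) then 1 else if (i, j) = (2, 2) then -6 else 0)"

definition fourth_power_Im_coeffs :: "nat \<Rightarrow> nat \<Rightarrow> real" where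
  "fourth_power_Im_coeffs i j = (if (i, j) = (3, 1) then 4 else if (i, j) = (1, 3) then -4 else 0)"

lemma poly2_4_expand:
  "poly2 4 c (x, y) =
     c 0 0 + c 0 1 * y + c 0 2 * y^2 + c 0 3 * y^3 + c 0 4 * y^4
   + c 1 0 * x + c 1 1 * x * y + c 1 2 * x * y^2 + c 1 3 * x * y^3
   + c 2 0 * x^2 + c 2 1 * x^2 * y + c 2 2 * x^2 * y^2
   + c 3 0 * x^3 + c 3 1 * x^3 * y + c 4 0 * x^4"
  unfolding poly2_def by (simp add: eval_nat_numeral atMost_Suc algebra_simps)

lemma Complex_power_4:
  "Complex x y ^ 4 = Complex (x^4 - 6 * x^2 * y^2 + y^4) (4 * x^3 * y - 4 * x * y^3)"
  by (simp add: complex_eq_iff eval_nat_numeral algebra_simps)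

lemma poly2_fourth_power_Re_coeffs:
  "poly2 4 fourth_power_Re_coeffs z = Re (Complex (fst z) (snd z) ^ 4)"
  by (cases z) (simp add: poly2_4_expand Complex_power_4 fourth_power_Re_coeffs_def)

lemma poly2_fourth_power_Im_coeffs:
  "poly2 4 fourth_power_Im_coeffs z = Im (Complex (fst z) (snd z) ^ 4)"
  by (cases z) (simp add: poly2_4_expand Complex_power_4 fourth_power_Im_coeffs_def)

lemma integral_cos_multiple_period:
  assumes "n > 0"
  shows "integral {0..2*pi} (\<lambda>t. cos (real n * t)) = 0"
proof -
  have "((\<lambda>t. cos (real n * t)) has_integral (sin (real n * (2*pi)) / n - sin (real n * 0) / n)) {0..2*pi}"
  proof (rule fundamental_theorem_of_calculus)
    fix t :: real
    have "((\<lambda>t. sin (real n * t) / n) has_real_derivative cos (real n * t)) (at t within {0..2*pi})"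
      using assms by (auto intro!: derivative_eq_intros)
    then show "((\<lambda>t. sin (real n * t) / n) has_vector_derivative cos (real n * t)) (at t within {0..2*pi})"
      by (simp add: has_real_derivative_iff_has_vector_derivative)
  qed simp
  moreover have "sin (real n * (2*pi)) = 0"
    using sin_npi[of "2 * n"] by (simp add: algebra_simps)
  ultimately show ?thesis
    by (simp add: integral_unique)
qed

lemma integral_sin_multiple_period:
  assumes "n > 0"
  shows "integral {0..2*pi} (\<lambda>t. sin (real n * t)) = 0"
proof -
  have "((\<lambda>t. sin (real n * t)) has_integral (- cos (real n * (2*pi)) / n - (- cos (real n * 0) / n))) {0..2*pi}"
  proof (rule fundamental_theorem_of_calculus)
    fix t :: real
    have "((\<lambda>t. - cos (real n * t) / n) has_real_derivative sin (real n * t)) (at t within {0..2*pi})"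
      using assms by (auto intro!: derivative_eq_intros)
    then show "((\<lambda>t. - cos (real n * t) / n) has_vector_derivative sin (real n * t)) (at t within {0..2*pi})"
      by (simp add: has_real_derivative_iff_has_vector_derivative)
  qed simp
  moreover have "cos (real n * (2*pi)) = 1"
    using cos_npi_int[of "2 * int n"] by (simp add: algebra_simps)
  ultimately show ?thesis
    by (simp add: integral_unique)
qed

lemma design_sum_fourth_powers_eq_0:
  assumes "sph_design_S1 4 X"
  shows "(\<Sum>x\<in>X. Complex (fst x) (snd x) ^ 4) = 0"
proof -
  have avg: "(\<Sum>x\<in>X. poly2 4 c x) / real (card X) =
      integral {0..2*pi} (\<lambda>t. poly2 4 c (cos t, sin t)) / (2*pi)" for c
    using assms unfolding sph_design_S1_def by blast
  have "card X \<noteq> 0"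
    using assms unfolding sph_design_S1_def by auto
  have "Complex (cos t) (sin t) ^ 4 = Complex (cos (4 * t)) (sin (4 * t))" for t
    using Complex.DeMoivre[of t 4] by (simp only: cis.ctr of_nat_numeral)
  then have "integral {0..2*pi} (\<lambda>t. poly2 4 fourth_power_Re_coeffs (cos t, sin t)) = 0"
    and "integral {0..2*pi} (\<lambda>t. poly2 4 fourth_power_Im_coeffs (cos t, sin t)) = 0"
    using integral_cos_multiple_period[of 4] integral_sin_multiple_period[of 4]
    by (simp_all add: poly2_fourth_power_Re_coeffs poly2_fourth_power_Im_coeffs)
  with avg[of fourth_power_Re_coeffs] avg[of fourth_power_Im_coeffs] \<open>card X \<noteq> 0\<close>
  have "(\<Sum>x\<in>X. Re (Complex (fst x) (snd x) ^ 4)) = 0" and "(\<Sum>x\<in>X. Im (Complex (fst x) (snd x) ^ 4)) = 0"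
    by (simp_all add: poly2_fourth_power_Re_coeffs poly2_fourth_power_Im_coeffs case_prod_unfold)
  then show ?thesis
    by (simp add: complex_eq_iff)
qed

lemma sum_fourth_powers_scaled_shell:
  assumes "R > 0"
  shows "(\<Sum>x\<in>(\<lambda>x. (fst x / R, snd x / R)) ` shell m. Complex (fst x) (snd x) ^ 4)
    = fourth_power_sum m / of_real (R ^ 4)"
proof -
  have "inj_on (\<lambda>x. (fst x / R, snd x / R)) (shell m)"
    using assms by (auto intro!: inj_onI simp: prod_eq_iff)
  moreover have "inj_on (\<lambda>x. Complex (fst x) (snd x)) (shell m)"
    by (auto intro!: inj_onI simp: prod_eq_iff)
  moreover have "Complex (a / R) (b / R) ^ 4 = Complex a b ^ 4 / of_real (R ^ 4)" for a b
  proof -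
    have "Complex (a / R) (b / R) = Complex a b / of_real R"
      by (simp add: complex_eq_iff)
    then show ?thesis
      by (simp add: power_divide)
  qed
  ultimately show ?thesis
    unfolding fourth_power_sum_def gauss_shell_eq_shell
    by (simp add: sum.reindex sum_divide_distrib del: of_real_power)
qed

theorem theorem1p1:
  fixes m :: nat
  assumes "m > 0" and "shell m \<noteq> {}"
  shows "\<not> sph_design_radius 4 (sqrt (real m)) (shell m)"
proof
  assume "sph_design_radius 4 (sqrt (real m)) (shell m)"
  then have "sph_design_S1 4 ((\<lambda>x. (fst x / sqrt (real m), snd x / sqrt (real m))) ` shell m)"
    unfolding sph_design_radius_def by blast
  then have "fourth_power_sum m / of_real (sqrt (real m) ^ 4) = 0"
    using design_sum_fourth_powers_eq_0 sum_fourth_powers_scaled_shell[of "sqrt (real m)" m] assms(1)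
    by simp
  then have "fourth_power_sum m = 0"
    using assms(1) by simp
  moreover have "gauss_shell m \<noteq> {}"
    using assms(2) gauss_shell_eq_shell by simp
  ultimately show False
    using fourth_power_sum_nonzero assms(1) by blast
qed

end
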